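(* Let $P,Q\in\Gamma_n$ with $P\ne Q$, and $0<r\le R$ with $r\le p_i/q_i\le R$ for all $i$. Then $$r\le\frac{F(Q\|P)}{F(P\|Q)}\le R\qquad\text{and}\qquad r\le\sqrt{\frac{G(Q\|P)}{G(P\|Q)}}\le R.$$
   Context: $\Gamma_n=\{P=(p_1,\dots,p_n): p_i>0,\ \sum_i p_i=1\}$, $n\ge2$. Relative Jensen–Shannon divergence $F(P\|Q)=\sum_i p_i\ln\frac{2p_i}{p_i+q_i}$, $F(Q\|P)=\sum_i q_i\ln\frac{2q_i}{p_i+q_i}$; relative arithmetic–geometric divergence $G(P\|Q)=\sum_i\frac{p_i+q_i}{2}\ln\frac{p_i+q_i}{2p_i}$, $G(Q\|P)=\sum_i\frac{p_i+q_i}{2}\ln\frac{p_i+q_i}{2q_i}$. *)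

theory Defs
  imports Complex_Main
begin

definition Gamma :: "nat \<Rightarrow> (nat \<Rightarrow> real) set" where
  "Gamma n = {p. (\<forall>i<n. p i > 0) \<and> (\<Sum>i<n. p i) = 1}"

definition relJS :: "nat \<Rightarrow> (nat \<Rightarrow> real) \<Rightarrow> (nat \<Rightarrow> real) \<Rightarrow> real" where
  "relJS n p q = (\<Sum>i<n. p i * ln (2 * p i / (p i + q i)))"

definition relAG :: "nat \<Rightarrow> (nat \<Rightarrow> real) \<Rightarrow> (nat \<Rightarrow> real) \<Rightarrow> real" where
  "relAG n p q = (\<Sum>i<n. (p i + q i) / 2 * ln ((p i + q i) / (2 * p i)))"

end

theory Submission
  imports Defs "HOL-Analysis.Convex"
begin

text \<open>
  All four divergences are Csiszar f-divergences \<open>C\<^sub>f(P,Q) = \<Sum>\<^sub>i q\<^sub>i f(p\<^sub>i/q\<^sub>i)\<close>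
  with generators vanishing at 1. If \<open>m g'' \<le> f'' \<le> M g''\<close> on the interval \<open>[r,R]\<close>
  containing all likelihood ratios, then \<open>f - m g\<close> and \<open>M g - f\<close> are convex there; a
  convex generator lies above its tangent at 1, and the tangent contributes
  \<open>c \<Sum>\<^sub>i (p\<^sub>i - q\<^sub>i) = 0\<close>, so \<open>m C\<^sub>g \<le> C\<^sub>f \<le> M C\<^sub>g\<close>. Strict convexity of g
  and \<open>P \<noteq> Q\<close> make \<open>C\<^sub>g\<close> positive. For F the second derivatives of the generators
  have quotient t, for G they have quotient \<open>t\<^sup>2\<close>, which gives the square root.
\<close>

lemma f''_pos_imp_f'_less:
  fixes f :: "real \<Rightarrow> real"
  assumes "convex C"
    and f': "\<And>x. x \<in> C \<Longrightarrow> DERIV f x :> f' x"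
    and f'': "\<And>x. x \<in> C \<Longrightarrow> DERIV f' x :> f'' x"
    and pos: "\<And>x. x \<in> C \<Longrightarrow> f'' x > 0"
    and x: "x \<in> C" and y: "y \<in> C" and "x \<noteq> y"
  shows "f' x * (y - x) < f y - f x"
proof -
  have f'_less: "f' u < f' v" if "u \<in> C" "v \<in> C" "u < v" for u v
  proof (rule DERIV_pos_imp_increasing[OF \<open>u < v\<close>])
    fix z assume "u \<le> z" "z \<le> v"
    with atMostAtLeast_subset_convex[OF \<open>convex C\<close> that] have "z \<in> C" by auto
    with f'' pos show "\<exists>y. DERIV f' z :> y \<and> y > 0" by blast
  qed
  have mvt: "\<exists>z\<in>C. u < z \<and> z < v \<and> f v - f u = (v - u) * f' z"
    if "u \<in> C" "v \<in> C" "u < v" for u v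
    using MVT2[OF \<open>u < v\<close>, of f f'] atMostAtLeast_subset_convex[OF \<open>convex C\<close> that] f'
    by (metis atLeastAtMost_iff less_imp_le subsetD)
  consider "x < y" | "y < x" using \<open>x \<noteq> y\<close> by linarith
  then show ?thesis
  proof cases
    case 1
    with mvt x y obtain z where "z \<in> C" "x < z" "f y - f x = (y - x) * f' z" by blast
    with f'_less[of x z] x 1 show ?thesis by (simp add: mult.commute)
  next
    case 2
    with mvt x y obtain z where "z \<in> C" "z < x" "f x - f y = (x - y) * f' z" by blast
    moreover have "(x - y) * f' z < (x - y) * f' x"
      using f'_less[of z x] \<open>z \<in> C\<close> \<open>z < x\<close> x 2 by (intro mult_strict_left_mono) auto
    ultimately show ?thesis by (simp add: algebra_simps)
  qed
qed

definition f_divergence :: "(real \<Rightarrow> real) \<Rightarrow> nat \<Rightarrow> (nat \<Rightarrow> real) \<Rightarrow> (nat \<Rightarrow> real) \<Rightarrow> real" where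
  "f_divergence f n p q = (\<Sum>i<n. q i * f (p i / q i))"

lemma f_divergence_diff:
  "f_divergence (\<lambda>x. f x - g x) n p q = f_divergence f n p q - f_divergence g n p q"
  by (simp add: f_divergence_def right_diff_distrib sum_subtractf)

lemma f_divergence_cmult:
  "f_divergence (\<lambda>x. c * f x) n p q = c * f_divergence f n p q"
  by (simp add: f_divergence_def sum_distrib_left mult.left_commute)

lemma f_divergence_affine_eq_zero:
  fixes p q :: "nat \<Rightarrow> real"
  assumes "\<And>i. i < n \<Longrightarrow> q i > 0" and "(\<Sum>i<n. p i) = (\<Sum>i<n. q i)"
  shows "f_divergence (\<lambda>t. c * (t - 1)) n p q = 0"
proof -
  have "f_divergence (\<lambda>t. c * (t - 1)) n p q = (\<Sum>i<n. c * (p i - q i))"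
    unfolding f_divergence_def
  proof (rule sum.cong)
    fix i assume "i \<in> {..<n}"
    with assms(1) have "q i > 0" by simp
    then show "q i * (c * (p i / q i - 1)) = c * (p i - q i)" by (simp add: field_simps)
  qed simp
  also have "\<dots> = c * ((\<Sum>i<n. p i) - (\<Sum>i<n. q i))"
    by (simp add: right_diff_distrib sum_distrib_left sum_subtractf)
  finally show ?thesis using assms(2) by simp
qed

lemma weighted_ratio_bounds_contain_one:
  fixes p q :: "nat \<Rightarrow> real"
  assumes "n > 0" and q_pos: "\<And>i. i < n \<Longrightarrow> q i > 0"
    and sums: "(\<Sum>i<n. p i) = (\<Sum>i<n. q i)"
    and ratio: "\<And>i. i < n \<Longrightarrow> a \<le> p i / q i \<and> p i / q i \<le> b"
  shows "a \<le> 1 \<and> 1 \<le> b"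
proof -
  have q_sum_pos: "(\<Sum>i<n. q i) > 0"
    using \<open>n > 0\<close> q_pos by (intro sum_pos) auto
  have "a * q i \<le> p i \<and> p i \<le> b * q i" if "i < n" for i
    using ratio[OF that] q_pos[OF that] by (simp add: pos_le_divide_eq pos_divide_le_eq)
  then have "a * (\<Sum>i<n. q i) \<le> (\<Sum>i<n. p i) \<and> (\<Sum>i<n. p i) \<le> b * (\<Sum>i<n. q i)"
    unfolding sum_distrib_left by (auto intro!: sum_mono)
  then show ?thesis
    using q_sum_pos sums by (simp add: mult_le_cancel_right2 mult_le_cancel_right1)
qed

lemma f_divergence_nonneg:
  fixes f f' f'' :: "real \<Rightarrow> real" and p q :: "nat \<Rightarrow> real"
  assumes "convex C" "1 \<in> C"
    and q_pos: "\<And>i. i < n \<Longrightarrow> q i > 0"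
    and sums: "(\<Sum>i<n. p i) = (\<Sum>i<n. q i)"
    and ratio: "\<And>i. i < n \<Longrightarrow> p i / q i \<in> C"
    and f': "\<And>x. x \<in> C \<Longrightarrow> DERIV f x :> f' x"
    and f'': "\<And>x. x \<in> C \<Longrightarrow> DERIV f' x :> f'' x"
    and nonneg: "\<And>x. x \<in> C \<Longrightarrow> f'' x \<ge> 0"
    and "f 1 = 0"
  shows "f_divergence f n p q \<ge> 0"
proof -
  have "q i * (f' 1 * (p i / q i - 1)) \<le> q i * f (p i / q i)" if "i < n" for i
    using f''_imp_f'[OF \<open>convex C\<close> f' f'' nonneg \<open>1 \<in> C\<close> ratio[OF that]] \<open>f 1 = 0\<close> q_pos[OF that]
    by (intro mult_left_mono) auto
  then have "f_divergence (\<lambda>t. f' 1 * (t - 1)) n p q \<le> f_divergence f n p q"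
    unfolding f_divergence_def by (intro sum_mono) auto
  with f_divergence_affine_eq_zero[OF q_pos sums] show ?thesis by simp
qed

lemma f_divergence_pos:
  fixes f f' f'' :: "real \<Rightarrow> real" and p q :: "nat \<Rightarrow> real"
  assumes "convex C" "1 \<in> C"
    and q_pos: "\<And>i. i < n \<Longrightarrow> q i > 0"
    and sums: "(\<Sum>i<n. p i) = (\<Sum>i<n. q i)"
    and "\<exists>i<n. p i \<noteq> q i"
    and ratio: "\<And>i. i < n \<Longrightarrow> p i / q i \<in> C"
    and f': "\<And>x. x \<in> C \<Longrightarrow> DERIV f x :> f' x"
    and f'': "\<And>x. x \<in> C \<Longrightarrow> DERIV f' x :> f'' x"
    and pos: "\<And>x. x \<in> C \<Longrightarrow> f'' x > 0"
    and "f 1 = 0"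
  shows "f_divergence f n p q > 0"
proof -
  have "q i * (f' 1 * (p i / q i - 1)) \<le> q i * f (p i / q i)" if "i < n" for i
    using f''_imp_f'[OF \<open>convex C\<close> f' f'' _ \<open>1 \<in> C\<close> ratio[OF that]] pos \<open>f 1 = 0\<close> q_pos[OF that]
    by (intro mult_left_mono) (auto intro: less_imp_le)
  moreover obtain j where "j < n" "p j \<noteq> q j"
    using \<open>\<exists>i<n. p i \<noteq> q i\<close> by blast
  moreover from this have "q j * (f' 1 * (p j / q j - 1)) < q j * f (p j / q j)"
    using f''_pos_imp_f'_less[OF \<open>convex C\<close> f' f'' pos \<open>1 \<in> C\<close> ratio[of j]] \<open>f 1 = 0\<close> q_pos[of j]
    by (intro mult_strict_left_mono) auto
  ultimately have "f_divergence (\<lambda>t. f' 1 * (t - 1)) n p q < f_divergence f n p q"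
    unfolding f_divergence_def by (intro sum_strict_mono_ex1) auto
  with f_divergence_affine_eq_zero[OF q_pos sums] show ?thesis by simp
qed

lemma f_divergence_ratio_bounds:
  fixes f f' f'' g g' g'' :: "real \<Rightarrow> real" and p q :: "nat \<Rightarrow> real"
  assumes q_pos: "\<And>i. i < n \<Longrightarrow> q i > 0"
    and sums: "(\<Sum>i<n. p i) = (\<Sum>i<n. q i)"
    and neq: "\<exists>i<n. p i \<noteq> q i"
    and ratio: "\<And>i. i < n \<Longrightarrow> a \<le> p i / q i \<and> p i / q i \<le> b"
    and f': "\<And>x. x \<in> {a..b} \<Longrightarrow> DERIV f x :> f' x"
    and f'': "\<And>x. x \<in> {a..b} \<Longrightarrow> DERIV f' x :> f'' x"
    and g': "\<And>x. x \<in> {a..b} \<Longrightarrow> DERIV g x :> g' x"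
    and g'': "\<And>x. x \<in> {a..b} \<Longrightarrow> DERIV g' x :> g'' x"
    and g''_pos: "\<And>x. x \<in> {a..b} \<Longrightarrow> g'' x > 0"
    and f''_bounds: "\<And>x. x \<in> {a..b} \<Longrightarrow> m * g'' x \<le> f'' x \<and> f'' x \<le> M * g'' x"
    and "f 1 = 0" "g 1 = 0"
  shows "m \<le> f_divergence f n p q / f_divergence g n p q
    \<and> f_divergence f n p q / f_divergence g n p q \<le> M"
proof -
  have "n > 0" using neq by auto
  then have one: "1 \<in> {a..b}"
    using weighted_ratio_bounds_contain_one[OF _ q_pos sums ratio] by simp
  have ratio': "p i / q i \<in> {a..b}" if "i < n" for i
    using ratio[OF that] by simp
  have g_pos: "f_divergence g n p q > 0"
    using f_divergence_pos[OF convex_real_interval(5) one q_pos sums neq ratio' g' g'' g''_pos \<open>g 1 = 0\<close>] .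
  have "f_divergence (\<lambda>x. f x - m * g x) n p q \<ge> 0"
    by (rule f_divergence_nonneg[OF convex_real_interval(5) one q_pos sums ratio',
          where f' = "\<lambda>x. f' x - m * g' x" and f'' = "\<lambda>x. f'' x - m * g'' x"])
      (use f' f'' g' g'' f''_bounds \<open>f 1 = 0\<close> \<open>g 1 = 0\<close> in \<open>auto intro!: DERIV_diff DERIV_cmult\<close>)
  moreover have "f_divergence (\<lambda>x. M * g x - f x) n p q \<ge> 0"
    by (rule f_divergence_nonneg[OF convex_real_interval(5) one q_pos sums ratio',
          where f' = "\<lambda>x. M * g' x - f' x" and f'' = "\<lambda>x. M * g'' x - f'' x"])
      (use f' f'' g' g'' f''_bounds \<open>f 1 = 0\<close> \<open>g 1 = 0\<close> in \<open>auto intro!: DERIV_diff DERIV_cmult\<close>)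
  ultimately show ?thesis
    using g_pos by (simp add: f_divergence_diff f_divergence_cmult pos_le_divide_eq pos_divide_le_eq)
qed

lemma relJS_as_f_divergence:
  assumes p_pos: "\<And>i. i < n \<Longrightarrow> p i > 0" and q_pos: "\<And>i. i < n \<Longrightarrow> q i > 0"
  shows "relJS n p q = f_divergence (\<lambda>t. t * ln (2 * t / (1 + t))) n p q"
    and "relJS n q p = f_divergence (\<lambda>t. ln (2 / (1 + t))) n p q"
proof -
  have args: "2 * (p i / q i) / (1 + p i / q i) = 2 * p i / (p i + q i)"
    "2 / (1 + p i / q i) = 2 * q i / (q i + p i)" if "i < n" for i
    using p_pos[OF that] q_pos[OF that] by (simp_all add: field_simps)
  have "p i * ln (2 * p i / (p i + q i)) = q i * (p i / q i * ln (2 * (p i / q i) / (1 + p i / q i)))"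
    and "q i * ln (2 * q i / (q i + p i)) = q i * ln (2 / (1 + p i / q i))" if "i < n" for i
    unfolding args[OF that] using q_pos[OF that] by simp_all
  then show "relJS n p q = f_divergence (\<lambda>t. t * ln (2 * t / (1 + t))) n p q"
    and "relJS n q p = f_divergence (\<lambda>t. ln (2 / (1 + t))) n p q"
    unfolding relJS_def f_divergence_def by (metis (no_types, lifting) lessThan_iff sum.cong)+
qed

lemma relAG_as_f_divergence:
  assumes p_pos: "\<And>i. i < n \<Longrightarrow> p i > 0" and q_pos: "\<And>i. i < n \<Longrightarrow> q i > 0"
  shows "relAG n p q = f_divergence (\<lambda>t. (1 + t) / 2 * ln ((1 + t) / (2 * t))) n p q"
    and "relAG n q p = f_divergence (\<lambda>t. (1 + t) / 2 * ln ((1 + t) / 2)) n p q"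
proof -
  have args: "(1 + p i / q i) / (2 * (p i / q i)) = (p i + q i) / (2 * p i)"
    "(1 + p i / q i) / 2 = (q i + p i) / (2 * q i)"
    and weight: "q i * ((1 + p i / q i) / 2) = (p i + q i) / 2" if "i < n" for i
    using p_pos[OF that] q_pos[OF that] by (simp_all add: field_simps)
  have "(p i + q i) / 2 * ln ((p i + q i) / (2 * p i))
      = q i * ((1 + p i / q i) / 2 * ln ((1 + p i / q i) / (2 * (p i / q i))))"
    and "(q i + p i) / 2 * ln ((q i + p i) / (2 * q i))
      = q i * ((1 + p i / q i) / 2 * ln ((1 + p i / q i) / 2))" if "i < n" for i
    unfolding mult.assoc[symmetric] weight[OF that] unfolding args[OF that]
    by (simp_all only: add.commute)
  then show "relAG n p q = f_divergence (\<lambda>t. (1 + t) / 2 * ln ((1 + t) / (2 * t))) n p q"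
    and "relAG n q p = f_divergence (\<lambda>t. (1 + t) / 2 * ln ((1 + t) / 2)) n p q"
    unfolding relAG_def f_divergence_def by (metis (no_types, lifting) lessThan_iff sum.cong)+
qed

lemma DERIV_relJS_gen:
  "(t::real) > 0 \<Longrightarrow>
    DERIV (\<lambda>t. t * ln (2 * t / (1 + t))) t :> ln (2 * t / (1 + t)) + 1 / (1 + t)"
  by (rule derivative_eq_intros refl | simp)+ (simp add: divide_simps power2_eq_square; algebra)

lemma DERIV_relJS_gen_deriv:
  "(t::real) > 0 \<Longrightarrow>
    DERIV (\<lambda>t. ln (2 * t / (1 + t)) + 1 / (1 + t)) t :> 1 / (t * (1 + t)^2)"
  by (rule derivative_eq_intros refl | simp)+ (simp add: divide_simps power2_eq_square; algebra)

lemma DERIV_relJS_swap_gen: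
  "(t::real) > 0 \<Longrightarrow> DERIV (\<lambda>t. ln (2 / (1 + t))) t :> - 1 / (1 + t)"
  by (rule derivative_eq_intros refl | simp)+ (simp add: divide_simps power2_eq_square; algebra)

lemma DERIV_relJS_swap_gen_deriv:
  "(t::real) > 0 \<Longrightarrow> DERIV (\<lambda>t. - 1 / (1 + t)) t :> 1 / (1 + t)^2"
  by (rule derivative_eq_intros refl | simp)+ (simp add: divide_simps power2_eq_square; algebra)

lemma DERIV_relAG_gen:
  "(t::real) > 0 \<Longrightarrow>
    DERIV (\<lambda>t. (1 + t) / 2 * ln ((1 + t) / (2 * t))) t :> ln ((1 + t) / (2 * t)) / 2 - 1 / (2 * t)"
  by (rule derivative_eq_intros refl | simp)+

lemma DERIV_relAG_gen_deriv:
  "(t::real) > 0 \<Longrightarrow>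
    DERIV (\<lambda>t. ln ((1 + t) / (2 * t)) / 2 - 1 / (2 * t)) t :> 1 / (2 * t^2 * (1 + t))"
  by (rule derivative_eq_intros refl | simp)+ (simp add: divide_simps power2_eq_square; algebra)

lemma DERIV_relAG_swap_gen:
  "(t::real) > 0 \<Longrightarrow>
    DERIV (\<lambda>t. (1 + t) / 2 * ln ((1 + t) / 2)) t :> (ln ((1 + t) / 2) + 1) / 2"
  by (rule derivative_eq_intros refl | simp)+

lemma DERIV_relAG_swap_gen_deriv:
  "(t::real) > 0 \<Longrightarrow> DERIV (\<lambda>t. (ln ((1 + t) / 2) + 1) / 2) t :> 1 / (2 * (1 + t))"
  by (rule derivative_eq_intros refl | simp)+ (simp add: divide_simps power2_eq_square; algebra)

lemma relJS_ratio_bounds: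
  fixes p q :: "nat \<Rightarrow> real"
  assumes p_pos: "\<And>i. i < n \<Longrightarrow> p i > 0" and q_pos: "\<And>i. i < n \<Longrightarrow> q i > 0"
    and sums: "(\<Sum>i<n. p i) = (\<Sum>i<n. q i)"
    and neq: "\<exists>i<n. p i \<noteq> q i"
    and "r > 0" and ratio: "\<And>i. i < n \<Longrightarrow> r \<le> p i / q i \<and> p i / q i \<le> R"
  shows "r \<le> relJS n q p / relJS n p q \<and> relJS n q p / relJS n p q \<le> R"
proof (simp only: relJS_as_f_divergence[OF p_pos q_pos],
    rule f_divergence_ratio_bounds[OF q_pos sums neq ratio,
      where f' = "\<lambda>t. - 1 / (1 + t)" and f'' = "\<lambda>t. 1 / (1 + t)^2"
        and g' = "\<lambda>t. ln (2 * t / (1 + t)) + 1 / (1 + t)" and g'' = "\<lambda>t. 1 / (t * (1 + t)^2)"])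
  fix x assume "x \<in> {r..R}"
  then have x: "x > 0" "r \<le> x" "x \<le> R" using \<open>r > 0\<close> by auto
  show "DERIV (\<lambda>t. ln (2 / (1 + t))) x :> - 1 / (1 + x)"
    by (rule DERIV_relJS_swap_gen[OF x(1)])
  show "DERIV (\<lambda>t. - 1 / (1 + t)) x :> 1 / (1 + x)^2"
    by (rule DERIV_relJS_swap_gen_deriv[OF x(1)])
  show "DERIV (\<lambda>t. t * ln (2 * t / (1 + t))) x :> ln (2 * x / (1 + x)) + 1 / (1 + x)"
    by (rule DERIV_relJS_gen[OF x(1)])
  show "DERIV (\<lambda>t. ln (2 * t / (1 + t)) + 1 / (1 + t)) x :> 1 / (x * (1 + x)^2)"
    by (rule DERIV_relJS_gen_deriv[OF x(1)])
  show "1 / (x * (1 + x)^2) > 0"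
    using x by simp
  have "1 / (1 + x)^2 = x * (1 / (x * (1 + x)^2))"
    using x by simp
  then show "r * (1 / (x * (1 + x)^2)) \<le> 1 / (1 + x)^2 \<and> 1 / (1 + x)^2 \<le> R * (1 / (x * (1 + x)^2))"
    using x by (simp only:) (intro conjI mult_right_mono; simp)
qed simp_all

lemma relAG_ratio_bounds:
  fixes p q :: "nat \<Rightarrow> real"
  assumes p_pos: "\<And>i. i < n \<Longrightarrow> p i > 0" and q_pos: "\<And>i. i < n \<Longrightarrow> q i > 0"
    and sums: "(\<Sum>i<n. p i) = (\<Sum>i<n. q i)"
    and neq: "\<exists>i<n. p i \<noteq> q i"
    and "r > 0" and ratio: "\<And>i. i < n \<Longrightarrow> r \<le> p i / q i \<and> p i / q i \<le> R"
  shows "r^2 \<le> relAG n q p / relAG n p q \<and> relAG n q p / relAG n p q \<le> R^2"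
proof (simp only: relAG_as_f_divergence[OF p_pos q_pos],
    rule f_divergence_ratio_bounds[OF q_pos sums neq ratio,
      where f' = "\<lambda>t. (ln ((1 + t) / 2) + 1) / 2" and f'' = "\<lambda>t. 1 / (2 * (1 + t))"
        and g' = "\<lambda>t. ln ((1 + t) / (2 * t)) / 2 - 1 / (2 * t)" and g'' = "\<lambda>t. 1 / (2 * t^2 * (1 + t))"])
  fix x assume "x \<in> {r..R}"
  then have x: "x > 0" "r \<le> x" "x \<le> R" using \<open>r > 0\<close> by auto
  show "DERIV (\<lambda>t. (1 + t) / 2 * ln ((1 + t) / 2)) x :> (ln ((1 + x) / 2) + 1) / 2"
    by (rule DERIV_relAG_swap_gen[OF x(1)])
  show "DERIV (\<lambda>t. (ln ((1 + t) / 2) + 1) / 2) x :> 1 / (2 * (1 + x))"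
    by (rule DERIV_relAG_swap_gen_deriv[OF x(1)])
  show "DERIV (\<lambda>t. (1 + t) / 2 * ln ((1 + t) / (2 * t))) x :> ln ((1 + x) / (2 * x)) / 2 - 1 / (2 * x)"
    by (rule DERIV_relAG_gen[OF x(1)])
  show "DERIV (\<lambda>t. ln ((1 + t) / (2 * t)) / 2 - 1 / (2 * t)) x :> 1 / (2 * x^2 * (1 + x))"
    by (rule DERIV_relAG_gen_deriv[OF x(1)])
  show "1 / (2 * x^2 * (1 + x)) > 0"
    using x by simp
  have "1 / (2 * (1 + x)) = x^2 * (1 / (2 * x^2 * (1 + x)))"
    using x by simp
  moreover have "r^2 \<le> x^2" "x^2 \<le> R^2"
    using x \<open>r > 0\<close> by (auto intro: power_mono)
  ultimately show "r^2 * (1 / (2 * x^2 * (1 + x))) \<le> 1 / (2 * (1 + x))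
      \<and> 1 / (2 * (1 + x)) \<le> R^2 * (1 / (2 * x^2 * (1 + x)))"
    using x by (simp only:) (intro conjI mult_right_mono; simp)
qed simp_all

theorem mainTheorem17:
  fixes n :: nat and p q :: "nat \<Rightarrow> real" and r R :: real
  assumes "n \<ge> 2"
    and "p \<in> Gamma n" and "q \<in> Gamma n"
    and "\<exists>i<n. p i \<noteq> q i"
    and "0 < r" and "r \<le> R"
    and "\<And>i. i < n \<Longrightarrow> r \<le> p i / q i \<and> p i / q i \<le> R"
  shows "r \<le> relJS n q p / relJS n p q \<and> relJS n q p / relJS n p q \<le> R
     \<and> r \<le> sqrt (relAG n q p / relAG n p q) \<and> sqrt (relAG n q p / relAG n p q) \<le> R"
proof -
  have p_pos: "\<And>i. i < n \<Longrightarrow> p i > 0" and q_pos: "\<And>i. i < n \<Longrightarrow> q i > 0"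
    and sums: "(\<Sum>i<n. p i) = (\<Sum>i<n. q i)"
    using assms(2,3) by (auto simp: Gamma_def)
  have JS: "r \<le> relJS n q p / relJS n p q \<and> relJS n q p / relJS n p q \<le> R"
    by (rule relJS_ratio_bounds[OF p_pos q_pos sums assms(4,5,7)])
  have AG: "r^2 \<le> relAG n q p / relAG n p q \<and> relAG n q p / relAG n p q \<le> R^2"
    by (rule relAG_ratio_bounds[OF p_pos q_pos sums assms(4,5,7)])
  then have "r \<le> sqrt (relAG n q p / relAG n p q)"
    by (simp add: real_le_rsqrt)
  moreover have "sqrt (relAG n q p / relAG n p q) \<le> R"
    using AG assms(5,6) by (simp add: real_le_lsqrt)
  ultimately show ?thesis
    using JS by blast
qed

end
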